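(* Let $n\ge2$, $V>0$, $c\in(0,\infty)$, and for $i,j\in[n]$ let $\Sigma_n^{\mathrm{sb}}$ have entries $\frac{V\pi}{i+j}$ and $\Sigma_n^{\mathrm{sp}}$ have entries $\frac{4V\pi^2}{(i+1)(j+1)}$. Let $\Sigma_n^{\mathrm{cr}}=\Sigma_n^{\mathrm{sb}}+c\Sigma_n^{\mathrm{sp}}$ if $c\le1$ and $\Sigma_n^{\mathrm{cr}}=\frac1c\Sigma_n^{\mathrm{sb}}+\Sigma_n^{\mathrm{sp}}$ if $c>1$. Let $\Sigma_n^{\mathrm{sb}}=L^{\mathrm{sb}}U^{\mathrm{sb}}$ be the (unique) LU decomposition of $\Sigma_n^{\mathrm{sb}}$ with $L^{\mathrm{sb}}$ unit lower triangular and $U^{\mathrm{sb}}$ upper triangular, and let $U^{\mathrm{sp}}=(u^{\mathrm{sp}}_{ij})$ be given by $u^{\mathrm{sp}}_{1j}=\frac{2V\pi^2}{j+1}$ and $u^{\mathrm{sp}}_{ij}=0$ for $i\ge2$ (so that $\Sigma_n^{\mathrm{sp}}=L^{\mathrm{sp}}U^{\mathrm{sp}}$ with $L^{\mathrm{sp}}$ unit lower triangular with first column $(2/(i+1))_i$ and zeros elsewhere below the diagonal). Then the (unique) LU decomposition $\Sigma_n^{\mathrm{cr}}=L^{\mathrm{cr}}U^{\mathrm{cr}}$ with $L^{\mathrm{cr}}$ unit lower triangular satisfies: (i) for $c\in(0,1]$, $L^{\mathrm{cr}}=L^{\mathrm{sb}}$ and $U^{\mathrm{cr}}=U^{\mathrm{sb}}+cU^{\mathrm{sp}}$;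 (ii) for $c\in(1,\infty)$, $L^{\mathrm{cr}}=L^{\mathrm{sb}}$ and $U^{\mathrm{cr}}=\frac1cU^{\mathrm{sb}}+U^{\mathrm{sp}}$.
   Context: These are the subcritical, supercritical and critical asymptotic covariance matrices of the vector $(\tilde L_t^{(0)},\dots,\tilde L_t^{(n-1)})$ of normalized length power functionals of a random geometric graph in dimension $d=2$ ($\tau_i=i-1$, $\kappa_2=\pi$) on a window of volume $V$; $c=\lim t\delta_t^2$. $[n]=\{1,\dots,n\}$. *)

theory Defs
  imports Complex_Main
begin

text \<open>n x n real matrices are represented as functions nat => nat => real,
  indexed by [n] = {1..n}; entries outside [n] x [n] are irrelevant.\<close>

definition unit_lower_tri :: "nat \<Rightarrow> (nat \<Rightarrow> nat \<Rightarrow> real) \<Rightarrow> bool" where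
  "unit_lower_tri n L \<longleftrightarrow>
     (\<forall>i\<in>{1..n}. \<forall>j\<in>{1..n}. (i < j \<longrightarrow> L i j = 0) \<and> (i = j \<longrightarrow> L i j = 1))"

definition upper_tri :: "nat \<Rightarrow> (nat \<Rightarrow> nat \<Rightarrow> real) \<Rightarrow> bool" where
  "upper_tri n U \<longleftrightarrow> (\<forall>i\<in>{1..n}. \<forall>j\<in>{1..n}. j < i \<longrightarrow> U i j = 0)"

definition mat_prod :: "nat \<Rightarrow> (nat \<Rightarrow> nat \<Rightarrow> real) \<Rightarrow> (nat \<Rightarrow> nat \<Rightarrow> real) \<Rightarrow> nat \<Rightarrow> nat \<Rightarrow> real" where
  "mat_prod n A B i j = (\<Sum>k=1..n. A i k * B k j)"

definition is_LU :: "nat \<Rightarrow> (nat \<Rightarrow> nat \<Rightarrow> real) \<Rightarrow> (nat \<Rightarrow> nat \<Rightarrow> real) \<Rightarrow> (nat \<Rightarrow> nat \<Rightarrow> real) \<Rightarrow> bool" where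
  "is_LU n A L U \<longleftrightarrow> unit_lower_tri n L \<and> upper_tri n U \<and>
     (\<forall>i\<in>{1..n}. \<forall>j\<in>{1..n}. A i j = mat_prod n L U i j)"

definition mat_eq :: "nat \<Rightarrow> (nat \<Rightarrow> nat \<Rightarrow> real) \<Rightarrow> (nat \<Rightarrow> nat \<Rightarrow> real) \<Rightarrow> bool" where
  "mat_eq n A B \<longleftrightarrow> (\<forall>i\<in>{1..n}. \<forall>j\<in>{1..n}. A i j = B i j)"

definition Sigma_sb :: "real \<Rightarrow> nat \<Rightarrow> nat \<Rightarrow> real" where
  "Sigma_sb V i j = V * pi / (real i + real j)"

definition Sigma_sp :: "real \<Rightarrow> nat \<Rightarrow> nat \<Rightarrow> real" where
  "Sigma_sp V i j = 4 * V * pi\<^sup>2 / ((real i + 1) * (real j + 1))"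

definition Sigma_cr :: "real \<Rightarrow> real \<Rightarrow> nat \<Rightarrow> nat \<Rightarrow> real" where
  "Sigma_cr V c i j = (if c \<le> 1 then Sigma_sb V i j + c * Sigma_sp V i j
                       else (1 / c) * Sigma_sb V i j + Sigma_sp V i j)"

definition U_sp :: "real \<Rightarrow> nat \<Rightarrow> nat \<Rightarrow> real" where
  "U_sp V i j = (if i = 1 then 2 * V * pi\<^sup>2 / (real j + 1) else 0)"

end

theory Submission
  imports Defs "HOL-Analysis.Analysis" "HOL-Computational_Algebra.Polynomial"
begin

text \<open>\<open>Sigma_sb V\<close> is a positive multiple of the Hilbert-type matrix \<open>1 / (i + j)\<close>, the Gram matrix
  of the functions \<open>t ^ (i - 1/2)\<close> in \<open>L\<^sup>2[0, 1]\<close>, hence positive definite, while \<open>Sigma_sp V\<close> is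
  positive semidefinite of rank one. So \<open>a * Sigma_sb V + b * Sigma_sp V\<close> (\<open>a > 0\<close>, \<open>b \<ge> 0\<close>) is
  positive definite, all pivots of any LU decomposition of it are nonzero, and the decomposition is
  unique. For existence, \<open>U_sp V\<close> has a single nonzero row, so \<open>L_sb * U_sp V\<close> only sees the first
  column \<open>2 / (i + 1)\<close> of \<open>L_sb\<close>, which is read off from the first column of \<open>Sigma_sb V\<close>; this
  gives \<open>Sigma_sp V = L_sb * U_sp V\<close>, and the claim follows by linearity.\<close>

definition quad_form :: "nat \<Rightarrow> (nat \<Rightarrow> nat \<Rightarrow> real) \<Rightarrow> (nat \<Rightarrow> real) \<Rightarrow> real" where
  "quad_form n A w = (\<Sum>i=1..n. \<Sum>j=1..n. w i * A i j * w j)"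

definition pos_def :: "nat \<Rightarrow> (nat \<Rightarrow> nat \<Rightarrow> real) \<Rightarrow> bool" where
  "pos_def n A \<longleftrightarrow> (\<forall>w. (\<exists>i\<in>{1..n}. w i \<noteq> 0) \<longrightarrow> 0 < quad_form n A w)"

definition pos_semidef :: "nat \<Rightarrow> (nat \<Rightarrow> nat \<Rightarrow> real) \<Rightarrow> bool" where
  "pos_semidef n A \<longleftrightarrow> (\<forall>w. 0 \<le> quad_form n A w)"

lemma quad_form_lincomb:
  "quad_form n (\<lambda>i j. a * A i j + b * B i j) w = a * quad_form n A w + b * quad_form n B w"
  unfolding quad_form_def by (simp add: sum.distrib sum_distrib_left algebra_simps)

lemma pos_def_lincomb:
  assumes "pos_def n A" and "pos_semidef n B" and "a > 0" and "b \<ge> 0"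
  shows "pos_def n (\<lambda>i j. a * A i j + b * B i j)"
  using assms unfolding pos_def_def pos_semidef_def quad_form_lincomb
  by (simp add: add_pos_nonneg)

lemma pos_def_scale:
  assumes "pos_def n A" and "a > 0"
  shows "pos_def n (\<lambda>i j. a * A i j)"
  using pos_def_lincomb[OF assms(1) _ assms(2), of "\<lambda>_ _. 0" 0]
  by (simp add: pos_semidef_def quad_form_def)

lemma pos_def_leading_block:
  assumes A: "pos_def n A" and "k \<le> n"
  shows "pos_def k A"
  unfolding pos_def_def
proof (intro allI impI)
  fix w :: "nat \<Rightarrow> real"
  assume "\<exists>i\<in>{1..k}. w i \<noteq> 0"
  define w' where "w' i = (if i \<le> k then w i else 0)" for i
  have "\<exists>i\<in>{1..n}. w' i \<noteq> 0"
    using \<open>\<exists>i\<in>{1..k}. w i \<noteq> 0\<close> \<open>k \<le> n\<close> by (auto simp: w'_def)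
  then have "0 < quad_form n A w'"
    using A by (simp add: pos_def_def)
  also have "quad_form n A w' = quad_form k A w"
    unfolding quad_form_def using \<open>k \<le> n\<close>
    by (intro sum.mono_neutral_cong_right) (auto simp: w'_def intro!: sum.neutral)
  finally show "0 < quad_form k A w" .
qed

lemma has_integral_power_0_1: "((\<lambda>t::real. t ^ k) has_integral 1 / (real k + 1)) {0..1}"
proof -
  have "((\<lambda>t::real. t ^ k) has_integral 1 ^ Suc k / real (Suc k) - 0 ^ Suc k / real (Suc k)) {0..1}"
  proof (rule fundamental_theorem_of_calculus)
    fix x :: real
    have "((\<lambda>t. t ^ Suc k / real (Suc k)) has_real_derivative x ^ k) (at x within {0..1})"
      using DERIV_cdivide[OF DERIV_pow[of "Suc k" x], of "real (Suc k)"]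
      by (simp del: of_nat_Suc add: has_field_derivative_at_within)
    then show "((\<lambda>t. t ^ Suc k / real (Suc k)) has_vector_derivative x ^ k) (at x within {0..1})"
      by (simp add: has_real_derivative_iff_has_vector_derivative)
  qed simp
  then show ?thesis by (simp add: add.commute)
qed

lemma integral_weighted_poly_square_pos:
  fixes p :: "real poly"
  assumes "p \<noteq> 0"
  shows "0 < integral {0..1} (\<lambda>t. t * poly p t ^ 2)"
proof -
  let ?f = "\<lambda>t. t * poly p t ^ 2"
  have cont: "continuous_on {0..1} ?f" by (intro continuous_intros)
  have nonneg: "\<And>t. t \<in> {0..1} \<Longrightarrow> 0 \<le> ?f t" by simp
  have "integral {0..1} ?f \<noteq> 0"
  proof
    assume "integral {0..1} ?f = 0"
    then have zero: "\<forall>t\<in>{0..1}. ?f t = 0"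
      using integral_eq_0_iff[OF cont _ nonneg] by simp
    have "{0<..1} \<subseteq> {t. poly p t = 0}"
    proof
      fix t :: real assume t: "t \<in> {0<..1}"
      then have "t \<in> {0..1}" by simp
      with zero have "?f t = 0" by blast
      with t show "t \<in> {t. poly p t = 0}" by simp
    qed
    moreover have "finite {t. poly p t = 0}" using assms by (rule poly_roots_finite)
    ultimately show False by (metis finite_subset infinite_Ioc zero_less_one)
  qed
  moreover have "0 \<le> integral {0..1} ?f"
    using nonneg by (intro integral_nonneg integrable_continuous_real cont) auto
  ultimately show ?thesis by simp
qed

text \<open>Since \<open>1 / (i + j)\<close> is the integral of \<open>t ^ (i + j - 1)\<close> over \<open>[0, 1]\<close>, the quadratic form
  is the integral of \<open>t * q t ^ 2\<close> with \<open>q t = (\<Sum>i. w i * t ^ (i - 1))\<close>.\<close>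

lemma quad_form_hilbert_integral:
  fixes n :: nat and w :: "nat \<Rightarrow> real"
  defines "p \<equiv> (\<Sum>i=1..n. monom (w i) (i - 1))"
  shows "quad_form n (\<lambda>i j. 1 / (real i + real j)) w = integral {0..1} (\<lambda>t. t * poly p t ^ 2)"
proof -
  have integrand: "t * poly p t ^ 2 = (\<Sum>i=1..n. \<Sum>j=1..n. w i * w j * t ^ (i - 1 + (j - 1) + 1))"
    for t :: real
  proof -
    have "t * poly p t ^ 2 = t * (\<Sum>i=1..n. \<Sum>j=1..n. (w i * t ^ (i - 1)) * (w j * t ^ (j - 1)))"
      unfolding p_def poly_sum poly_monom power2_eq_square sum_product ..
    also have "\<dots> = (\<Sum>i=1..n. \<Sum>j=1..n. w i * w j * t ^ (i - 1 + (j - 1) + 1))"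
      unfolding sum_distrib_left
      by (intro sum.cong refl) (simp only: power_add power_one_right mult_ac)
    finally show ?thesis .
  qed
  have "((\<lambda>t. t * poly p t ^ 2) has_integral
          (\<Sum>i=1..n. \<Sum>j=1..n. w i * w j * (1 / (real (i - 1 + (j - 1) + 1) + 1)))) {0..1}"
    unfolding integrand
    by (intro has_integral_sum has_integral_mult_right has_integral_power_0_1 finite_atLeastAtMost)
  moreover have "(\<Sum>i=1..n. \<Sum>j=1..n. w i * w j * (1 / (real (i - 1 + (j - 1) + 1) + 1)))
      = quad_form n (\<lambda>i j. 1 / (real i + real j)) w"
    unfolding quad_form_def by (intro sum.cong refl) (auto simp: of_nat_diff)
  ultimately show ?thesis by (simp add: integral_unique)
qed

lemma pos_def_hilbert: "pos_def n (\<lambda>i j. 1 / (real i + real j))"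
  unfolding pos_def_def
proof (intro allI impI)
  fix w :: "nat \<Rightarrow> real"
  assume "\<exists>k\<in>{1..n}. w k \<noteq> 0"
  then obtain k where k: "k \<in> {1..n}" "w k \<noteq> 0" by blast
  define p where "p = (\<Sum>i=1..n. monom (w i) (i - 1))"
  have "coeff p (k - 1) = (\<Sum>i=1..n. if i - 1 = k - 1 then w i else 0)"
    unfolding p_def by (simp add: coeff_sum coeff_monom)
  also have "\<dots> = (\<Sum>i\<in>{k}. w i)"
    using k by (intro sum.mono_neutral_cong_right) auto
  finally have "p \<noteq> 0" using k by auto
  then show "0 < quad_form n (\<lambda>i j. 1 / (real i + real j)) w"
    unfolding quad_form_hilbert_integral p_def[symmetric] by (rule integral_weighted_poly_square_pos)
qed

lemma pos_def_Sigma_sb: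
  assumes "V > 0"
  shows "pos_def n (Sigma_sb V)"
proof -
  have "Sigma_sb V = (\<lambda>i j. (V * pi) * (1 / (real i + real j)))"
    by (simp add: fun_eq_iff Sigma_sb_def)
  then show ?thesis using pos_def_scale[OF pos_def_hilbert, of "V * pi" n] assms by simp
qed

lemma pos_semidef_Sigma_sp:
  assumes "V \<ge> 0"
  shows "pos_semidef n (Sigma_sp V)"
  unfolding pos_semidef_def
proof
  fix w :: "nat \<Rightarrow> real"
  have square: "(\<Sum>i=1..n. w i / (real i + 1))\<^sup>2
      = (\<Sum>i=1..n. \<Sum>j=1..n. w i / (real i + 1) * (w j / (real j + 1)))"
    by (simp add: power2_eq_square sum_product)
  have "quad_form n (Sigma_sp V) w = 4 * V * pi\<^sup>2 * (\<Sum>i=1..n. w i / (real i + 1))\<^sup>2"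
    unfolding quad_form_def Sigma_sp_def square sum_distrib_left
    by (intro sum.cong refl) (simp add: field_simps)
  then show "0 \<le> quad_form n (Sigma_sp V) w" using assms by simp
qed

lemma is_LU_triangular:
  assumes "is_LU n A L U" and "i \<in> {1..n}" and "j \<in> {1..n}"
  shows "i < j \<Longrightarrow> L i j = 0" and "L i i = 1" and "j < i \<Longrightarrow> U i j = 0"
  using assms by (auto simp: is_LU_def unit_lower_tri_def upper_tri_def)

lemma is_LU_entry:
  assumes LU: "is_LU n A L U" and i: "i \<in> {1..n}" and j: "j \<in> {1..n}"
  shows "A i j = (\<Sum>m\<in>{1..<min i j}. L i m * U m j) + L i (min i j) * U (min i j) j"
proof -
  have "A i j = (\<Sum>m=1..n. L i m * U m j)"
    using LU i j by (simp add: is_LU_def mat_prod_def)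
  also have "\<dots> = (\<Sum>m=1..min i j. L i m * U m j)"
  proof (rule sum.mono_neutral_right)
    show "\<forall>m\<in>{1..n} - {1..min i j}. L i m * U m j = 0"
      using is_LU_triangular(1,3)[OF LU] i j by (metis Diff_iff atLeastAtMost_iff min_def
          mult_eq_0_iff not_le_imp_less)
  qed (use i j in auto)
  also have "{1..min i j} = insert (min i j) {1..<min i j}" using i j by auto
  finally show ?thesis by (simp add: add.commute)
qed

lemma is_LU_first_column:
  assumes LU: "is_LU n A L U" and i: "i \<in> {1..n}"
  shows "A i 1 = L i 1 * A 1 1"
proof -
  have one: "1 \<in> {1..n}" using i by simp
  have "min i 1 = 1" using i by simp
  then have "A i 1 = L i 1 * U 1 1" and "A 1 1 = L 1 1 * U 1 1"
    using is_LU_entry[OF LU i one] is_LU_entry[OF LU one one] by simp_all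
  with is_LU_triangular(2)[OF LU one one] show ?thesis by simp
qed

lemma unit_lower_tri_leading_block:
  "unit_lower_tri n L \<Longrightarrow> k \<le> n \<Longrightarrow> unit_lower_tri k L"
  unfolding unit_lower_tri_def by (meson atLeastAtMost_iff order.trans)

lemma upper_tri_leading_block:
  "upper_tri n U \<Longrightarrow> k \<le> n \<Longrightarrow> upper_tri k U"
  unfolding upper_tri_def by (meson atLeastAtMost_iff order.trans)

lemma is_LU_leading_block:
  assumes LU: "is_LU n A L U" and "k \<le> n"
  shows "is_LU k A L U"
  unfolding is_LU_def
proof (intro conjI ballI)
  show "unit_lower_tri k L" and "upper_tri k U"
    using LU \<open>k \<le> n\<close> unit_lower_tri_leading_block upper_tri_leading_block
    by (auto simp: is_LU_def)
  fix i j assume i: "i \<in> {1..k}" and j: "j \<in> {1..k}"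
  have "A i j = (\<Sum>m=1..n. L i m * U m j)"
    using LU i j \<open>k \<le> n\<close> by (simp add: is_LU_def mat_prod_def)
  also have "\<dots> = (\<Sum>m=1..k. L i m * U m j)"
    using LU i \<open>k \<le> n\<close>
    by (intro sum.mono_neutral_right) (auto simp: is_LU_def unit_lower_tri_def)
  finally show "A i j = mat_prod k L U i j" by (simp add: mat_prod_def)
qed

lemma unit_lower_tri_left_solvable:
  assumes "unit_lower_tri n L"
  shows "\<exists>w. \<forall>j\<in>{1..n}. (\<Sum>m=1..n. w m * L m j) = b j"
  using assms
proof (induction n arbitrary: b)
  case 0
  then show ?case by simp
next
  case (Suc n)
  then have "unit_lower_tri n L" by (simp add: unit_lower_tri_leading_block)
  with Suc.IH[of "\<lambda>j. b j - b (Suc n) * L (Suc n) j"] obtain w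
    where w: "\<forall>j\<in>{1..n}. (\<Sum>m=1..n. w m * L m j) = b j - b (Suc n) * L (Suc n) j"
    by blast
  define w' where "w' = w(Suc n := b (Suc n))"
  have extend: "(\<Sum>m=1..Suc n. w' m * L m j)
      = (\<Sum>m=1..n. w m * L m j) + b (Suc n) * L (Suc n) j" for j
  proof -
    have "(\<Sum>m=1..n. w' m * L m j) = (\<Sum>m=1..n. w m * L m j)"
      unfolding w'_def by (intro sum.cong) auto
    then show ?thesis by (simp add: w'_def)
  qed
  have "(\<Sum>m=1..Suc n. w' m * L m j) = b j" if j: "j \<in> {1..Suc n}" for j
  proof (cases "j = Suc n")
    case True
    have "(\<Sum>m=1..n. w m * L m j) = 0"
      using Suc.prems True by (intro sum.neutral) (auto simp: unit_lower_tri_def)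
    moreover have "L (Suc n) (Suc n) = 1"
      using Suc.prems by (force simp: unit_lower_tri_def)
    ultimately show ?thesis using True by (subst extend) simp
  next
    case False
    then show ?thesis using extend w j by simp
  qed
  then show ?case by blast
qed

text \<open>If \<open>U n n = 0\<close>, the vector \<open>w\<close> with \<open>w\<^sup>T L = e\<^sub>n\<^sup>T\<close> satisfies
  \<open>w\<^sup>T A w = (U w)\<^sub>n = U n n * w n = 0\<close>.\<close>

lemma is_LU_last_diag_nonzero:
  assumes A: "pos_def n A" and LU: "is_LU n A L U" and "1 \<le> n"
  shows "U n n \<noteq> 0"
proof
  assume Unn: "U n n = 0"
  have n: "n \<in> {1..n}" using \<open>1 \<le> n\<close> by simp
  have "unit_lower_tri n L" using LU by (simp add: is_LU_def)
  then obtain w where w: "\<forall>j\<in>{1..n}. (\<Sum>m=1..n. w m * L m j) = (if j = n then 1 else 0)"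
    using unit_lower_tri_left_solvable[of n L "\<lambda>j. if j = n then 1 else 0"] by blast
  have row: "(\<Sum>i=1..n. w i * A i j) = U n j" if j: "j \<in> {1..n}" for j
  proof -
    have "(\<Sum>i=1..n. w i * A i j) = (\<Sum>i=1..n. \<Sum>m=1..n. w i * L i m * U m j)"
      using LU j by (simp add: is_LU_def mat_prod_def sum_distrib_left mult_ac)
    also have "\<dots> = (\<Sum>m=1..n. (\<Sum>i=1..n. w i * L i m) * U m j)"
      by (subst sum.swap) (simp add: sum_distrib_right)
    also have "\<dots> = (\<Sum>m=1..n. if m = n then U m j else 0)"
      using w by (intro sum.cong) auto
    finally show ?thesis using n by simp
  qed
  have "quad_form n A w = (\<Sum>j=1..n. (\<Sum>i=1..n. w i * A i j) * w j)"
    unfolding quad_form_def by (subst sum.swap) (simp add: sum_distrib_right)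
  also have "\<dots> = (\<Sum>j=1..n. U n j * w j)"
    using row by simp
  also have "\<dots> = 0"
    using is_LU_triangular(3)[OF LU n] Unn
    by (intro sum.neutral) (metis atLeastAtMost_iff le_neq_implies_less mult_eq_0_iff)
  finally have "quad_form n A w = 0" .
  moreover have "\<exists>m\<in>{1..n}. w m \<noteq> 0"
    using w n by (metis (no_types, lifting) mult_zero_left sum.neutral zero_neq_one)
  ultimately show False using A unfolding pos_def_def by (metis less_irrefl)
qed

lemma is_LU_pos_def_diag_nonzero:
  assumes "pos_def n A" and "is_LU n A L U" and "k \<in> {1..n}"
  shows "U k k \<noteq> 0"
  using assms is_LU_last_diag_nonzero[OF pos_def_leading_block is_LU_leading_block] by simp

text \<open>Doolittle's recursion: entry \<open>(i, j)\<close> with \<open>i \<le> j\<close> determines \<open>U i j\<close> since \<open>L i i = 1\<close>, and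
  entry \<open>(j, i)\<close> with \<open>i < j\<close> determines \<open>L j i\<close> since \<open>U i i \<noteq> 0\<close>, once the rows of \<open>U\<close> and
  the columns of \<open>L\<close> before \<open>i\<close> are known.\<close>

lemma is_LU_unique:
  assumes LU1: "is_LU n A L1 U1" and LU2: "is_LU n A L2 U2"
    and nonzero: "\<forall>k\<in>{1..n}. U1 k k \<noteq> 0"
  shows "mat_eq n L2 L1 \<and> mat_eq n U2 U1"
proof -
  have "\<forall>j\<in>{1..n}. U2 i j = U1 i j \<and> L2 j i = L1 j i" if "i \<in> {1..n}" for i
    using that
  proof (induction i rule: less_induct)
    case (less i)
    have earlier: "(\<Sum>m\<in>{1..<i}. L2 j m * U2 m k) = (\<Sum>m\<in>{1..<i}. L1 j m * U1 m k)"
      if "j \<in> {1..n}" "k \<in> {1..n}" for j k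
      using less that by (intro sum.cong) auto
    have U: "U2 i j = U1 i j" if j: "j \<in> {1..n}" for j
    proof (cases "j < i")
      case True
      then show ?thesis using is_LU_triangular(3) LU1 LU2 less.prems j by metis
    next
      case False
      then show ?thesis
        using is_LU_entry[OF LU1 less.prems j] is_LU_entry[OF LU2 less.prems j]
          earlier[OF less.prems j] is_LU_triangular(2)[OF LU1 less.prems less.prems]
          is_LU_triangular(2)[OF LU2 less.prems less.prems]
        by (simp add: min_def)
    qed
    have L: "L2 j i = L1 j i" if j: "j \<in> {1..n}" for j
    proof (cases "j \<le> i")
      case True
      then show ?thesis using is_LU_triangular(1,2) LU1 LU2 less.prems j
        by (metis le_neq_implies_less)
    next
      case False
      have "L2 j i * U1 i i = L1 j i * U1 i i"
        using is_LU_entry[OF LU1 j less.prems] is_LU_entry[OF LU2 j less.prems]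
          earlier[OF j less.prems] U[OF less.prems] False
        by (simp add: min_def)
      then show ?thesis using nonzero less.prems by simp
    qed
    show ?case using U L by simp
  qed
  then show ?thesis by (auto simp: mat_eq_def)
qed

lemma is_LU_unique_pos_def:
  assumes "pos_def n A" and "is_LU n A L1 U1" and "is_LU n A L2 U2"
  shows "mat_eq n L2 L1 \<and> mat_eq n U2 U1"
  using assms is_LU_unique is_LU_pos_def_diag_nonzero by metis

lemma is_LU_lincomb:
  assumes "is_LU n A L U" and "is_LU n B L U'"
  shows "is_LU n (\<lambda>i j. a * A i j + b * B i j) L (\<lambda>i j. a * U i j + b * U' i j)"
  using assms
  by (auto simp: is_LU_def upper_tri_def mat_prod_def sum.distrib sum_distrib_left algebra_simps)

lemma is_LU_Sigma_sp:
  assumes LU: "is_LU n (Sigma_sb V) L U" and "V > 0"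
  shows "is_LU n (Sigma_sp V) L (U_sp V)"
  unfolding is_LU_def
proof (intro conjI ballI)
  show "unit_lower_tri n L" using LU by (simp add: is_LU_def)
  show "upper_tri n (U_sp V)" by (simp add: upper_tri_def U_sp_def)
  fix i j assume i: "i \<in> {1..n}" and j: "j \<in> {1..n}"
  have "V * pi / (real i + 1) = L i 1 * (V * pi / 2)"
    using is_LU_first_column[OF LU i] by (simp add: Sigma_sb_def)
  then have "(V * pi) * (L i 1 * (real i + 1)) = (V * pi) * 2"
    by (simp add: field_simps)
  then have "L i 1 * (real i + 1) = 2"
    using \<open>V > 0\<close> by simp
  then have first_column: "L i 1 = 2 / (real i + 1)"
    by (simp add: field_simps)
  have "mat_prod n L (U_sp V) i j = (\<Sum>m=1..n. if m = 1 then L i 1 * U_sp V 1 j else 0)"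
    unfolding mat_prod_def U_sp_def by (intro sum.cong) auto
  also have "\<dots> = 2 / (real i + 1) * (2 * V * pi\<^sup>2 / (real j + 1))"
    using i first_column by (simp add: U_sp_def)
  also have "\<dots> = Sigma_sp V i j"
    by (simp add: Sigma_sp_def field_simps)
  finally show "Sigma_sp V i j = mat_prod n L (U_sp V) i j" by simp
qed

lemma is_LU_Sigma_lincomb:
  assumes LU: "is_LU n (Sigma_sb V) L U" and "V > 0" and "a > 0" and "b \<ge> 0"
  defines "A \<equiv> \<lambda>i j. a * Sigma_sb V i j + b * Sigma_sp V i j"
    and "U' \<equiv> \<lambda>i j. a * U i j + b * U_sp V i j"
  shows "is_LU n A L U' \<and> (\<forall>L2 U2. is_LU n A L2 U2 \<longrightarrow> mat_eq n L2 L \<and> mat_eq n U2 U')"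
proof -
  have LU': "is_LU n A L U'"
    unfolding A_def U'_def using is_LU_lincomb[OF LU is_LU_Sigma_sp[OF LU \<open>V > 0\<close>]] .
  have "pos_def n A"
    unfolding A_def using assms
    by (intro pos_def_lincomb pos_def_Sigma_sb pos_semidef_Sigma_sp) auto
  with LU' show ?thesis using is_LU_unique_pos_def by blast
qed

theorem theorem8p1:
  fixes n :: nat and V c :: real and L_sb U_sb :: "nat \<Rightarrow> nat \<Rightarrow> real"
  assumes "n \<ge> 2" and "V > 0" and "c > 0"
    and "is_LU n (Sigma_sb V) L_sb U_sb"
  shows "(c \<le> 1 \<longrightarrow>
            is_LU n (Sigma_cr V c) L_sb (\<lambda>i j. U_sb i j + c * U_sp V i j) \<and>
            (\<forall>L U. is_LU n (Sigma_cr V c) L U \<longrightarrow>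
               mat_eq n L L_sb \<and> mat_eq n U (\<lambda>i j. U_sb i j + c * U_sp V i j)))
       \<and> (1 < c \<longrightarrow>
            is_LU n (Sigma_cr V c) L_sb (\<lambda>i j. (1 / c) * U_sb i j + U_sp V i j) \<and>
            (\<forall>L U. is_LU n (Sigma_cr V c) L U \<longrightarrow>
               mat_eq n L L_sb \<and> mat_eq n U (\<lambda>i j. (1 / c) * U_sb i j + U_sp V i j)))"
proof -
  have "c \<le> 1 \<Longrightarrow> Sigma_cr V c = (\<lambda>i j. 1 * Sigma_sb V i j + c * Sigma_sp V i j)"
    and "1 < c \<Longrightarrow> Sigma_cr V c = (\<lambda>i j. (1 / c) * Sigma_sb V i j + 1 * Sigma_sp V i j)"
    by (simp_all add: fun_eq_iff Sigma_cr_def)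
  then show ?thesis
    using is_LU_Sigma_lincomb[OF assms(4,2), of 1 c]
      is_LU_Sigma_lincomb[OF assms(4,2), of "1 / c" 1] \<open>c > 0\<close>
    by auto
qed

end
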